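(* Let $E/\mathbb{Q}$ be given by the model $y^2=x^3+Ax+B$ ($A,B\in\mathbb{Z}$) described in the context and $X=\max\{|A|^3,|B|^2\}$. Let $P,Q\in E(\mathbb{Q})$ satisfy $X^{1/6}\le x(P)<x(Q)$ and $x(P)=x_1/s$, $x(Q)=x_2/s$ with $x_1,x_2\in\mathbb{Z}$, $s$ a positive integer, and $\gcd(x_1,s)=\gcd(x_2,s)=1$. Then $h(P+Q)\le h(P)+2h(Q)+2.9$.
   Context: The model is obtained from a global minimal Weierstrass equation of $E$ by the substitution $x\mapsto \frac{1}{36}(x-3b_2)$, $y\mapsto \frac12(\frac{y}{108}-\frac{a_1}{36}(x-3b_2)-a_3)$. $h$ is the absolute logarithmic Weil height and $h(P)=h(x(P))$. *)

theory Defs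
  imports "HOL-Analysis.Analysis"
begin

text \<open>A long Weierstrass model  y^2 + a1 x y + a3 y = x^3 + a2 x^2 + a4 x + a6.\<close>
datatype weier = W rat rat rat rat rat

fun w_b2 :: "weier \<Rightarrow> rat" where "w_b2 (W a1 a2 a3 a4 a6) = a1^2 + 4*a2"
fun w_b4 :: "weier \<Rightarrow> rat" where "w_b4 (W a1 a2 a3 a4 a6) = 2*a4 + a1*a3"
fun w_b6 :: "weier \<Rightarrow> rat" where "w_b6 (W a1 a2 a3 a4 a6) = a3^2 + 4*a6"
fun w_b8 :: "weier \<Rightarrow> rat" where
  "w_b8 (W a1 a2 a3 a4 a6) = a1^2*a6 + 4*a2*a6 - a1*a3*a4 + a2*a3^2 - a4^2"

definition w_c4 :: "weier \<Rightarrow> rat" where "w_c4 E = (w_b2 E)^2 - 24 * w_b4 E"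
definition w_c6 :: "weier \<Rightarrow> rat" where
  "w_c6 E = 36 * w_b2 E * w_b4 E - 216 * w_b6 E - (w_b2 E)^3"
definition w_disc :: "weier \<Rightarrow> rat" where
  "w_disc E = 9 * w_b2 E * w_b4 E * w_b6 E - (w_b2 E)^2 * w_b8 E
              - 8 * (w_b4 E)^3 - 27 * (w_b6 E)^2"

fun w_integral :: "weier \<Rightarrow> bool" where
  "w_integral (W a1 a2 a3 a4 a6) \<longleftrightarrow> a1 \<in> \<int> \<and> a2 \<in> \<int> \<and> a3 \<in> \<int> \<and> a4 \<in> \<int> \<and> a6 \<in> \<int>"

text \<open>Standard change of variables  x = u^2 x' + r,  y = u^3 y' + s u^2 x' + t  (Silverman III.1).\<close>
fun w_change :: "rat \<Rightarrow> rat \<Rightarrow> rat \<Rightarrow> rat \<Rightarrow> weier \<Rightarrow> weier" where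
  "w_change uu rr ss tt (W a1 a2 a3 a4 a6) =
     W ((a1 + 2* ss) / uu)
       ((a2 - ss*a1 + 3* rr - ss^2) / uu^2)
       ((a3 + rr*a1 + 2* tt) / uu^3)
       ((a4 - ss*a3 + 2* rr*a2 - (tt + rr* ss)*a1 + 3* rr^2 - 2* ss* tt) / uu^4)
       ((a6 + rr*a4 + rr^2*a2 + rr^3 - tt*a3 - tt^2 - rr* tt*a1) / uu^6)"

definition global_minimal :: "weier \<Rightarrow> bool" where
  "global_minimal E \<longleftrightarrow> w_integral E \<and> w_disc E \<noteq> 0 \<and>
     (\<forall>u r s t. u \<noteq> 0 \<longrightarrow> w_integral (w_change u r s t E) \<longrightarrow>
        \<bar>w_disc E\<bar> \<le> \<bar>w_disc (w_change u r s t E)\<bar>)"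

datatype ec_point = Infty | Pt rat rat

fun on_curve :: "rat \<Rightarrow> rat \<Rightarrow> ec_point \<Rightarrow> bool" where
  "on_curve A B Infty = True"
| "on_curve A B (Pt x y) \<longleftrightarrow> y^2 = x^3 + A*x + B"

fun ec_add :: "rat \<Rightarrow> rat \<Rightarrow> ec_point \<Rightarrow> ec_point \<Rightarrow> ec_point" where
  "ec_add A B Infty P = P"
| "ec_add A B P Infty = P"
| "ec_add A B (Pt x1 y1) (Pt x2 y2) =
     (if x1 = x2 \<and> y1 = - y2 then Infty
      else let l = (if x1 = x2 then (3*x1^2 + A) / (2*y1) else (y2 - y1) / (x2 - x1));
               x3 = l^2 - x1 - x2
           in Pt x3 (l*(x1 - x3) - y1))"

definition rat_height :: "rat \<Rightarrow> real" where
  "rat_height r = (case quotient_of r of (p, q) \<Rightarrow> ln (real_of_int (max \<bar>p\<bar> q)))"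

fun pt_height :: "ec_point \<Rightarrow> real" where
  "pt_height Infty = 0"
| "pt_height (Pt x y) = rat_height x"

end

theory Submission
  imports Defs
begin

(*
  The chord through P and Q gives
  x(P + Q) = N / (s (x2 - x1)^2) with N = (x1 x2 + A s^2)(x1 + x2) + 2 B s^3 - 2 s^3 yP yQ,
  and s^3 yP yQ is an integer since its square is the integer product of
  s^3 yP^2 = x1^3 + A x1 s^2 + B s^3 and the analogous value at x2.
  The hypothesis X^(1/6) <= x1/s implies |A| s^2 <= x1^2 and |B| s^3 <= x1^3, which bounds
  numerator and denominator by 12 x1 x2^2. As x1 >= s and the fractions are reduced,
  h(P) = log x1 and h(Q) = log x2, and log 12 < 2.9.
*)

lemma rat_height_of_int_div:
  fixes a s :: int
  assumes "s > 0" "coprime a s"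
  shows "rat_height (of_int a / of_int s) = ln (real_of_int (max \<bar>a\<bar> s))"
proof -
  have "quotient_of (of_int a / of_int s) = (a, s)"
    using assms by (simp add: Fract_of_int_quotient[symmetric] quotient_of_Fract)
  then show ?thesis unfolding rat_height_def by simp
qed


lemma rat_height_of_int_div_le:
  fixes N D M :: int
  assumes "D > 0" "\<bar>N\<bar> \<le> M" "D \<le> M"
  shows "rat_height (of_int N / of_int D) \<le> ln (real_of_int M)"
proof -
  obtain p q where pq: "quotient_of (of_int N / of_int D) = (p, q)"
    by (cases "quotient_of (of_int N / of_int D)")
  have q: "q > 0" and cop: "coprime p q"
    using quotient_of_denom_pos[OF pq] quotient_of_coprime[OF pq] .
  have "(of_int N / of_int D :: rat) = of_int p / of_int q"
    using quotient_of_div[OF pq] .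
  then have "of_int (p * D) = (of_int (N * q) :: rat)"
    using q assms(1) by (simp add: field_simps)
  then have cross: "p * D = N * q"
    by (simp only: of_int_eq_iff)
  then have "q dvd D"
    using cop by (metis coprime_commute coprime_dvd_mult_right_iff dvd_triv_right)
  then obtain k where k: "D = q * k" ..
  have "k > 0"
    using k q assms(1) by (simp add: zero_less_mult_iff)
  moreover have "N = p * k"
    using cross k q by (simp add: algebra_simps)
  ultimately have "\<bar>p\<bar> \<le> \<bar>N\<bar>" "q \<le> D"
    using k q by (simp_all add: abs_mult mult_le_cancel_left1)
  then have "max \<bar>p\<bar> q \<le> M"
    using assms by simp
  then show ?thesis
    unfolding rat_height_def pq using q by simp
qed


lemma rat_power_eq_of_int_imp_Ints:
  fixes z :: rat and m :: int
  assumes "z ^ n = of_int m" "n > 0"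
  shows "z \<in> \<int>"
proof -
  obtain p q where pq: "quotient_of z = (p, q)" by (cases "quotient_of z")
  have q: "q > 0" and cop: "coprime p q"
    using quotient_of_denom_pos[OF pq] quotient_of_coprime[OF pq] .
  have z: "z = of_int p / of_int q"
    using quotient_of_div[OF pq] .
  have "of_int (p ^ n) = (of_int (m * q ^ n) :: rat)"
    using assms(1) q unfolding z by (simp add: field_simps power_divide)
  then have "q ^ n dvd p ^ n"
    by (simp only: of_int_eq_iff) simp
  moreover have "coprime (q ^ n) (p ^ n)"
    using cop by (simp add: coprime_commute)
  ultimately have "is_unit (q ^ n)"
    by (meson coprime_common_divisor dvd_refl)
  then have "q = 1"
    using q assms(2) self_le_power[of q n] by simp
  then show ?thesis
    unfolding z by simp
qed


lemma ln_12_le: "ln (12::real) \<le> 2.9"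
proof -
  have "1 + 1.45 + 1.45\<^sup>2 / 2 \<le> exp (1.45::real)"
    by (rule exp_lower_Taylor_quadratic) simp
  then have "(1 + 1.45 + 1.45\<^sup>2 / 2)\<^sup>2 \<le> (exp (1.45::real))\<^sup>2"
    by (rule power_mono) simp
  moreover have "(exp (1.45::real))\<^sup>2 = exp 2.9"
    by (simp add: exp_double[symmetric])
  ultimately have "12 \<le> exp (2.9::real)"
    by (simp add: power2_eq_square)
  then show ?thesis
    using ln_le_cancel_iff[of 12 "exp 2.9"] by simp
qed


lemma w_disc_eq_c4_c6: "1728 * w_disc E = w_c4 E ^ 3 - w_c6 E ^ 2"
proof (cases E)
  case (W a1 a2 a3 a4 a6)
  show ?thesis
    unfolding W w_disc_def w_c4_def w_c6_def by simp algebra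
qed


lemma global_minimal_short_coeffs_not_both_zero:
  assumes "global_minimal E" "of_int A = - 27 * w_c4 E" "of_int B = - 54 * w_c6 E"
  shows "A \<noteq> 0 \<or> B \<noteq> 0"
proof -
  have "w_disc E \<noteq> 0"
    using assms(1) unfolding global_minimal_def by simp
  then have "w_c4 E \<noteq> 0 \<or> w_c6 E \<noteq> 0"
    using w_disc_eq_c4_c6[of E] by auto
  then show ?thesis
    using assms(2,3) by auto
qed


lemma ec_add_x_distinct:
  fixes A B u1 u2 v1 v2 :: rat
  assumes "on_curve A B (Pt u1 v1)" "on_curve A B (Pt u2 v2)" "u1 \<noteq> u2"
  obtains v where "ec_add A B (Pt u1 v1) (Pt u2 v2)
    = Pt (((u1 * u2 + A) * (u1 + u2) + 2 * B - 2 * v1 * v2) / (u2 - u1)^2) v"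
proof -
  define l where "l = (v2 - v1) / (u2 - u1)"
  have d: "u2 - u1 \<noteq> 0"
    using assms(3) by simp
  have "l^2 - u1 - u2 = ((v2 - v1)^2 - (u1 + u2) * (u2 - u1)^2) / (u2 - u1)^2"
    unfolding l_def using d by (simp add: field_simps power_divide)
  also have "(v2 - v1)^2 = v1^2 + v2^2 - 2 * v1 * v2"
    by (simp add: power2_eq_square algebra_simps)
  \<comment> \<open>the curve equations turn \<open>v1^2 + v2^2\<close> into \<open>u1^3 + u2^3 + A (u1 + u2) + 2 B\<close>\<close>
  also have "v1^2 + v2^2 - 2 * v1 * v2 - (u1 + u2) * (u2 - u1)^2
      = (u1 * u2 + A) * (u1 + u2) + 2 * B - 2 * v1 * v2"
    using assms(1,2) by (simp add: power2_eq_square power3_eq_cube algebra_simps)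
  finally have "l^2 - u1 - u2 = ((u1 * u2 + A) * (u1 + u2) + 2 * B - 2 * v1 * v2) / (u2 - u1)^2" .
  then show thesis
    using that assms(3) by (simp add: l_def Let_def)
qed


lemma on_curve_of_int_div:
  fixes A B x s :: int
  assumes "on_curve (of_int A) (of_int B) (Pt (of_int x / of_int s) y)" "s \<noteq> 0"
  shows "of_int s ^ 3 * y^2 = of_int (x^3 + A * x * s^2 + B * s^3)"
  using assms by (simp add: field_simps power3_eq_cube power2_eq_square)


lemma ec_add_x_of_int_div:
  fixes A B x1 x2 s :: int and y1 y2 :: rat
  assumes P: "on_curve (of_int A) (of_int B) (Pt (of_int x1 / of_int s) y1)"
    and Q: "on_curve (of_int A) (of_int B) (Pt (of_int x2 / of_int s) y2)"
    and "s > 0" "x1 \<noteq> x2"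
  obtains z :: int and v where
    "z^2 = (x1^3 + A * x1 * s^2 + B * s^3) * (x2^3 + A * x2 * s^2 + B * s^3)"
    "ec_add (of_int A) (of_int B) (Pt (of_int x1 / of_int s) y1) (Pt (of_int x2 / of_int s) y2)
       = Pt (of_int ((x1 * x2 + A * s^2) * (x1 + x2) + 2 * B * s^3 - 2 * z)
             / of_int (s * (x2 - x1)^2)) v"
proof -
  have s: "(of_int s :: rat) \<noteq> 0"
    using assms(3) by simp
  let ?n1 = "x1^3 + A * x1 * s^2 + B * s^3" and ?n2 = "x2^3 + A * x2 * s^2 + B * s^3"
  have "(of_int s^3 * y1 * y2)^2 = (of_int s^3 * y1^2) * (of_int s^3 * y2^2)"
    by (simp add: power_mult_distrib power2_eq_square)
  also have "\<dots> = of_int (?n1 * ?n2)"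
    using on_curve_of_int_div[OF P] on_curve_of_int_div[OF Q] assms(3) by simp
  finally have square: "(of_int s^3 * y1 * y2)^2 = of_int (?n1 * ?n2)" .
  then have "of_int s^3 * y1 * y2 \<in> \<int>"
    by (rule rat_power_eq_of_int_imp_Ints) simp
  then obtain z where z: "of_int s^3 * y1 * y2 = of_int z"
    by (elim Ints_cases)
  have "z^2 = ?n1 * ?n2"
    using square unfolding z by (simp only: of_int_power[symmetric] of_int_eq_iff)
  let ?u1 = "of_int x1 / of_int s :: rat" and ?u2 = "of_int x2 / of_int s :: rat"
  obtain v where "ec_add (of_int A) (of_int B) (Pt ?u1 y1) (Pt ?u2 y2)
    = Pt (((?u1 * ?u2 + of_int A) * (?u1 + ?u2) + 2 * of_int B - 2 * y1 * y2) / (?u2 - ?u1)^2) v"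
    using ec_add_x_distinct[OF P Q] assms(4) s by (auto simp: divide_cancel_right)
  moreover have "(?u2 - ?u1)^2 = of_int ((x2 - x1)^2) / of_int s^2"
    by (simp add: diff_divide_distrib[symmetric] power_divide)
  moreover have "(?u1 * ?u2 + of_int A) * (?u1 + ?u2) + 2 * of_int B - 2 * y1 * y2
      = of_int ((x1 * x2 + A * s^2) * (x1 + x2) + 2 * B * s^3 - 2 * z) / of_int s^3"
    using s by (simp add: z[symmetric] field_simps power2_eq_square power3_eq_cube)
  ultimately show thesis
    using that \<open>z^2 = ?n1 * ?n2\<close> s assms(4) by (simp add: power2_eq_square power3_eq_cube)
qed


lemma root6_le_imp_coeff_bounds:
  fixes A B x s :: int
  assumes "A \<noteq> 0 \<or> B \<noteq> 0" "s > 0"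
    and "root 6 (real_of_int (max (\<bar>A\<bar>^3) (B^2))) \<le> real_of_int x / real_of_int s"
  shows "s \<le> x" "\<bar>A\<bar> * s^2 \<le> x^2" "\<bar>B\<bar> * s^3 \<le> x^3"
proof -
  define X where "X = max (\<bar>A\<bar>^3) (B^2)"
  have "X \<ge> 1"
  proof (cases "A = 0")
    case True
    then have "1 \<le> B^2"
      using assms(1) by (smt (verit) zero_less_power2)
    then show ?thesis
      unfolding X_def by simp
  next
    case False
    then show ?thesis
      unfolding X_def by (simp add: le_max_iff_disj one_le_power)
  qed
  then have "1 \<le> root 6 (real_of_int X)"
    by simp
  then have "1 \<le> real_of_int x / real_of_int s"
    using assms(3) unfolding X_def by linarith
  then show "s \<le> x"
    using assms(2) by (simp add: le_divide_eq)
  then have x: "x > 0"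
    using assms(2) by simp
  have "real_of_int X = (root 6 (real_of_int X)) ^ 6"
    using \<open>X \<ge> 1\<close> by simp
  also have "\<dots> \<le> (real_of_int x / real_of_int s) ^ 6"
    using assms(3) \<open>X \<ge> 1\<close> unfolding X_def[symmetric] by (intro power_mono) simp_all
  finally have "real_of_int X \<le> (real_of_int x / real_of_int s) ^ 6" .
  then have "X * s^6 \<le> x^6"
    using assms(2) by (simp add: field_simps power_divide flip: of_int_power of_int_mult of_int_le_iff)
  moreover have "\<bar>A\<bar>^3 * s^6 \<le> X * s^6" "B^2 * s^6 \<le> X * s^6"
    unfolding X_def by (simp_all add: mult_right_mono)
  ultimately have "\<bar>A\<bar>^3 * s^6 \<le> x^6" "B^2 * s^6 \<le> x^6"
    by simp_all
  then have A: "(\<bar>A\<bar> * s^2)^3 \<le> (x^2)^3" and B: "(\<bar>B\<bar> * s^3)^2 \<le> (x^3)^2"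
    by (simp_all add: power_mult_distrib flip: power_mult)
  from A show "\<bar>A\<bar> * s^2 \<le> x^2"
    by (subst (asm) power_mono_iff) auto
  from B show "\<bar>B\<bar> * s^3 \<le> x^3"
    using x assms(2) by (subst (asm) power_mono_iff) auto
qed


lemma cubic_abs_le:
  fixes A B x s :: int
  assumes "0 \<le> x" "0 \<le> s" "\<bar>A\<bar> * s^2 \<le> x^2" "\<bar>B\<bar> * s^3 \<le> x^3"
  shows "\<bar>x^3 + A * x * s^2 + B * s^3\<bar> \<le> 3 * x^3"
proof -
  have "\<bar>A * x * s^2\<bar> = x * (\<bar>A\<bar> * s^2)"
    using assms(1) by (simp add: abs_mult)
  also have "\<dots> \<le> x * x^2"
    using assms(1,3) by (rule mult_left_mono[rotated])
  finally have "\<bar>A * x * s^2\<bar> \<le> x^3"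
    by (simp add: power3_eq_cube power2_eq_square)
  moreover have "\<bar>B * s^3\<bar> \<le> x^3"
    using assms(2,4) by (simp add: abs_mult)
  moreover have "0 \<le> x^3"
    using assms(1) by simp
  ultimately show ?thesis
    by linarith
qed


lemma chord_numerator_abs_le:
  fixes A B s x1 x2 z :: int
  assumes "0 < s" "s \<le> x1" "x1 < x2" "\<bar>A\<bar> * s^2 \<le> x1^2" "\<bar>B\<bar> * s^3 \<le> x1^3"
    and "z^2 = (x1^3 + A * x1 * s^2 + B * s^3) * (x2^3 + A * x2 * s^2 + B * s^3)"
  shows "\<bar>(x1 * x2 + A * s^2) * (x1 + x2) + 2 * B * s^3 - 2 * z\<bar> \<le> 12 * (x1 * x2^2)"
proof -
  have x1: "0 < x1"
    using assms(1,2) by simp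
  have "x1^2 \<le> x2^2" "x1^3 \<le> x2^3"
    using x1 assms(3) by (simp_all add: power_mono)
  then have "\<bar>A\<bar> * s^2 \<le> x2^2" "\<bar>B\<bar> * s^3 \<le> x2^3"
    using assms(4,5) by simp_all
  then have "\<bar>x2^3 + A * x2 * s^2 + B * s^3\<bar> \<le> 3 * x2^3"
    using x1 assms(1,3) by (intro cubic_abs_le) simp_all
  moreover have "\<bar>x1^3 + A * x1 * s^2 + B * s^3\<bar> \<le> 3 * x1^3"
    using x1 assms(1,4,5) by (intro cubic_abs_le) simp_all
  ultimately have "\<bar>z\<bar>^2 \<le> (3 * x1^3) * (3 * x2^3)"
    unfolding power_abs[symmetric] assms(6) abs_mult using x1 by (intro mult_mono) simp_all
  also have "\<dots> = 9 * (x1^2 * x2^3) * x1"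
    by (simp add: power2_eq_square power3_eq_cube)
  also have "\<dots> \<le> 9 * (x1^2 * x2^3) * x2"
    using x1 assms(3) by (intro mult_left_mono) simp_all
  also have "\<dots> = (3 * x1 * x2^2)^2"
    by (simp add: power2_eq_square power3_eq_cube)
  finally have z: "\<bar>z\<bar> \<le> 3 * x1 * x2^2"
    by (rule power2_le_imp_le) (use x1 in simp)
  have "x1 * x1 \<le> x1 * x2"
    using x1 assms(3) by simp
  then have "\<bar>A * s^2\<bar> \<le> x1 * x2"
    using assms(4) by (simp add: abs_mult power2_eq_square)
  then have "\<bar>x1 * x2 + A * s^2\<bar> * \<bar>x1 + x2\<bar> \<le> (2 * x1 * x2) * (2 * x2)"
    using x1 assms(3) by (intro mult_mono) simp_all
  then have P: "\<bar>(x1 * x2 + A * s^2) * (x1 + x2)\<bar> \<le> 4 * (x1 * x2^2)"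
    by (simp add: abs_mult power2_eq_square)
  have "\<bar>B * s^3\<bar> \<le> x1 * x1^2"
    using assms(1,5) by (simp add: abs_mult power3_eq_cube power2_eq_square)
  also have "\<dots> \<le> x1 * x2^2"
    using x1 \<open>x1^2 \<le> x2^2\<close> by simp
  finally have "\<bar>B * s^3\<bar> \<le> x1 * x2^2" .
  with P z show ?thesis
    unfolding abs_le_iff by linarith
qed

theorem corollary3p3:
  fixes Emin :: weier and A B x1 x2 s :: int and yP yQ :: rat
  assumes "global_minimal Emin"
    and "of_int A = - 27 * w_c4 Emin" and "of_int B = - 54 * w_c6 Emin"
    and "on_curve (of_int A) (of_int B) (Pt (of_int x1 / of_int s) yP)"
    and "on_curve (of_int A) (of_int B) (Pt (of_int x2 / of_int s) yQ)"
    and "s > 0" and "gcd x1 s = 1" and "gcd x2 s = 1"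
    and "root 6 (real_of_int (max (\<bar>A\<bar>^3) (B^2))) \<le> real_of_int x1 / real_of_int s"
    and "x1 < x2"
  shows "pt_height (ec_add (of_int A) (of_int B) (Pt (of_int x1 / of_int s) yP)
                                                   (Pt (of_int x2 / of_int s) yQ))
         \<le> pt_height (Pt (of_int x1 / of_int s) yP) + 2 * pt_height (Pt (of_int x2 / of_int s) yQ) + 2.9"
proof -
  let ?P = "Pt (of_int x1 / of_int s) yP" and ?Q = "Pt (of_int x2 / of_int s) yQ"
  \<comment> \<open>minimality enters only through \<open>\<Delta> \<noteq> 0\<close>, which gives \<open>X \<ge> 1\<close> and hence \<open>s \<le> x1\<close>\<close>
  have "A \<noteq> 0 \<or> B \<noteq> 0"
    using assms(1-3) by (rule global_minimal_short_coeffs_not_both_zero)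
  from root6_le_imp_coeff_bounds[OF this assms(6,9)]
  have bounds: "s \<le> x1" "\<bar>A\<bar> * s^2 \<le> x1^2" "\<bar>B\<bar> * s^3 \<le> x1^3" .
  then have pos: "0 < x1" "0 < x2"
    using assms(6,10) by simp_all
  obtain z v where z: "z^2 = (x1^3 + A * x1 * s^2 + B * s^3) * (x2^3 + A * x2 * s^2 + B * s^3)"
    and sum: "ec_add (of_int A) (of_int B) ?P ?Q
      = Pt (of_int ((x1 * x2 + A * s^2) * (x1 + x2) + 2 * B * s^3 - 2 * z)
            / of_int (s * (x2 - x1)^2)) v"
    using ec_add_x_of_int_div[OF assms(4-6)] assms(10) by blast
  have "s * (x2 - x1)^2 \<le> x1 * x2^2"
    using bounds pos assms(10) by (intro mult_mono power_mono) simp_all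
  then have "pt_height (ec_add (of_int A) (of_int B) ?P ?Q) \<le> ln (real_of_int (12 * (x1 * x2^2)))"
    unfolding sum pt_height.simps
    using chord_numerator_abs_le[OF assms(6) bounds(1) assms(10) bounds(2,3) z] assms(6,10) pos
    by (intro rat_height_of_int_div_le) simp_all
  also have "\<dots> = ln 12 + ln (real_of_int x1) + 2 * ln (real_of_int x2)"
    using pos by (simp add: ln_mult ln_realpow)
  finally have "pt_height (ec_add (of_int A) (of_int B) ?P ?Q)
      \<le> ln 12 + ln (real_of_int x1) + 2 * ln (real_of_int x2)" .
  moreover have "pt_height ?P = ln (real_of_int x1)" "pt_height ?Q = ln (real_of_int x2)"
    using rat_height_of_int_div[of s x1] rat_height_of_int_div[of s x2] assms(6-8,10) bounds(1)
    by (simp_all add: coprime_iff_gcd_eq_1)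
  ultimately show ?thesis
    using ln_12_le by linarith
qed

end
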